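(* Let $f:X\to\mathcal G$ be a function and $x_0\in\operatorname{dom} f$. The following are equivalent: (a) $f(x_0)=\inf f[X]$; (b) $\varphi_{f,z^*}(x_0)\le\varphi_{f,z^*}(x)$ for all $x\in X$, $z^*\in C^-\setminus\{0\}$; (c) $\varphi_{f,z^*}(x_0)\ominus\varphi_{f,z^*}(x)\le0$ for all $x\in X$, $z^*\in C^-\setminus\{0\}$; (d) $0\in f(x_0)\ominus f(x)$ for all $x\in X$; (e) for all $x\in X$, $z^*\in C^-\setminus\{0\}$: $\varphi_{f,z^*}(x_0)=-\infty$ or $0\le\varphi_{f,z^*}(x)\ominus\varphi_{f,z^*}(x_0)$. Each of these conditions implies (f): $0^+f(x_0)\supseteq f(x)\ominus f(x_0)$ for all $x\in X$.
   Context: $X$ real linear space, $Z$ real locally convex Hausdorff space with dual $Z^*$, $C\subseteq Z$ closed convex cone, $0\in C$, $C^-=\{z^*:z^*(c)\le0\ \forall c\in C\}$, $C^-\setminus\{0\}\ne\emptyset$. $\mathcal G=\{A\subseteq Z:A=\operatorname{cl}\operatorname{co}(A+C)\}$; $A\ominus B=\{z\in Z:B+\{z\}\subseteq A\}$; $0^+A=\{z:A+\{z\}\subseteq A\}$ for $A\ne\emptyset$, $0^+\emptyset=\emptyset$. $\operatorname{dom}f=\{x:f(x)\ne\emptyset\}$, $\inf f[X]=\operatorname{cl}\operatorname{co}\bigcup_{x\in X}f(x)$. On $\overline{\mathbb R}$: inf-addition $\dot+$ ($(-\infty)\dot+(+\infty)=+\infty$), $r\ominus s=\inf\{t\in\mathbb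 R:r\le s\dot+t\}$ ($\inf\emptyset=+\infty$). $\varphi_{f,z^*}(x)=\inf\{-z^*(z):z\in f(x)\}$ ($+\infty$ if $f(x)=\emptyset$). *)

theory Defs
  imports "HOL-Analysis.Analysis"
begin

text \<open>Real locally convex Hausdorff topological vector space structure on a type
  (Hausdorff via the sort t2_space).\<close>
definition lc_tvs :: "'z::{real_vector,topological_space} itself \<Rightarrow> bool" where
  "lc_tvs _ \<longleftrightarrow>
     continuous_on UNIV (\<lambda>p::'z \<times> 'z. fst p + snd p) \<and>
     continuous_on UNIV (\<lambda>p::real \<times> 'z. fst p *\<^sub>R snd p) \<and>
     (\<forall>U::'z set. open U \<and> 0 \<in> U \<longrightarrow> (\<exists>V. open V \<and> convex V \<and> 0 \<in> V \<and> V \<subseteq> U))"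

definition topdual :: "('z::{real_vector,topological_space} \<Rightarrow> real) set" where
  "topdual = {zs. linear zs \<and> continuous_on UNIV zs}"

definition negdual :: "'z::{real_vector,topological_space} set \<Rightarrow> ('z \<Rightarrow> real) set" where
  "negdual C = {zs \<in> topdual. \<forall>c\<in>C. zs c \<le> 0}"

definition setplus :: "'z::real_vector set \<Rightarrow> 'z set \<Rightarrow> 'z set" where
  "setplus A B = {a + b | a b. a \<in> A \<and> b \<in> B}"

definition GC :: "'z::{real_vector,topological_space} set \<Rightarrow> 'z set set" where
  "GC C = {A. A = closure (convex hull (setplus A C))}"

definition setminus_geom :: "'z::real_vector set \<Rightarrow> 'z set \<Rightarrow> 'z set" where
  "setminus_geom A B = {z. setplus B {z} \<subseteq> A}"

definition recc_cone :: "'z::real_vector set \<Rightarrow> 'z set" where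
  "recc_cone A = (if A = {} then {} else {z. setplus A {z} \<subseteq> A})"

definition sv_dom :: "('x \<Rightarrow> 'z set) \<Rightarrow> 'x set" where
  "sv_dom f = {x. f x \<noteq> {}}"

definition sv_inf :: "('x \<Rightarrow> 'z::{real_vector,topological_space} set) \<Rightarrow> 'z set" where
  "sv_inf f = closure (convex hull (\<Union>x. f x))"

definition inf_plus :: "ereal \<Rightarrow> ereal \<Rightarrow> ereal" where
  "inf_plus r s = (if r = \<infinity> \<or> s = \<infinity> then \<infinity> else r + s)"

definition ereal_minus_inf :: "ereal \<Rightarrow> ereal \<Rightarrow> ereal" where
  "ereal_minus_inf r s = Inf {ereal t | t. r \<le> inf_plus s (ereal t)}"

definition scal_phi :: "('x \<Rightarrow> 'z set) \<Rightarrow> ('z \<Rightarrow> real) \<Rightarrow> 'x \<Rightarrow> ereal" where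
  "scal_phi f zs x = Inf {ereal (- zs z) | z. z \<in> f x}"

end

theory Submission
  imports Defs
begin

text \<open>Every condition is a reformulation of \<open>f x \<subseteq> f x0\<close> for all \<open>x\<close>. For (a) this holds because
  \<open>f x0\<close> is closed and convex. For (b), inclusion gives the inequalities by monotonicity of the
  infimum; conversely a point of \<open>f x\<close> outside \<open>f x0\<close> is strictly separated from \<open>f x0\<close> by a
  continuous functional (Hahn--Banach applied to the Minkowski gauge of an open convex
  neighbourhood of \<open>0\<close>), whose negative lies in \<open>C\<^sup>-\<close> because \<open>f x0 + C \<subseteq> f x0\<close>.
  Conditions (c) and (e) are (b) again, since \<open>r \<ominus> s = r - s\<close> for finite \<open>s\<close> and
  \<open>\<phi>(x0) < +\<infinity>\<close>; (d) is the inclusion itself, and (f) follows from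
  \<open>f x0 + w \<subseteq> f x \<subseteq> f x0\<close>.\<close>

definition sublinear :: "('a::real_vector \<Rightarrow> real) \<Rightarrow> bool" where
  "sublinear p \<longleftrightarrow> (\<forall>x y. p (x + y) \<le> p x + p y) \<and> (\<forall>c x. 0 < c \<longrightarrow> p (c *\<^sub>R x) = c * p x)"

text \<open>Hahn--Banach is done with graphs: a subspace of \<open>'a \<times> real\<close> lying below the graph of \<open>p\<close>.
  Since \<open>p 0 = 0\<close> for sublinear \<open>p\<close>, such a set is the graph of a linear functional on a
  subspace of \<open>'a\<close> (\<open>dominated_linear_graph_functional\<close>), and no quotient or span needs to be
  formed when extending it.\<close>

definition dominated_linear_graph :: "('a::real_vector \<Rightarrow> real) \<Rightarrow> ('a \<times> real) set \<Rightarrow> bool" where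
  "dominated_linear_graph p G \<longleftrightarrow>
     (\<forall>x a y b. (x, a) \<in> G \<longrightarrow> (y, b) \<in> G \<longrightarrow> (x + y, a + b) \<in> G) \<and>
     (\<forall>x a c. (x, a) \<in> G \<longrightarrow> (c *\<^sub>R x, c * a) \<in> G) \<and>
     (\<forall>x a. (x, a) \<in> G \<longrightarrow> a \<le> p x)"

lemma sublinear_zero:
  assumes "sublinear p" shows "p 0 = 0"
proof -
  have "p ((2::real) *\<^sub>R x) = 2 * p x" for x using assms unfolding sublinear_def by simp
  from this[of 0] show ?thesis by simp
qed

lemma dominated_linear_graph_functional:
  assumes "p 0 = 0" "dominated_linear_graph p G" "(x, a) \<in> G" "(x, b) \<in> G"
  shows "a = b"
proof -
  have "(x + (-1) *\<^sub>R x, a + (-1) * b) \<in> G" "(x + (-1) *\<^sub>R x, b + (-1) * a) \<in> G"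
    using assms(2-4) unfolding dominated_linear_graph_def by blast+
  then have "a - b \<le> p 0" "b - a \<le> p 0"
    using assms(2) unfolding dominated_linear_graph_def by fastforce+
  then show ?thesis using assms(1) by simp
qed

lemma dominated_linear_graph_Union:
  assumes "\<And>G. G \<in> \<G> \<Longrightarrow> dominated_linear_graph p G"
    and chain: "\<And>G H. G \<in> \<G> \<Longrightarrow> H \<in> \<G> \<Longrightarrow> G \<subseteq> H \<or> H \<subseteq> G"
  shows "dominated_linear_graph p (\<Union>\<G>)"
  unfolding dominated_linear_graph_def
proof (intro conjI allI impI)
  fix x a y b assume "(x, a) \<in> \<Union>\<G>" "(y, b) \<in> \<Union>\<G>"
  then obtain G H where GH: "G \<in> \<G>" "H \<in> \<G>" "(x, a) \<in> G" "(y, b) \<in> H" by auto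
  with chain have "(x, a) \<in> G \<union> H \<and> (y, b) \<in> G \<union> H \<and> (G \<union> H = G \<or> G \<union> H = H)" by blast
  then have "(x + y, a + b) \<in> G \<union> H"
    using assms(1)[OF GH(1)] assms(1)[OF GH(2)] unfolding dominated_linear_graph_def by metis
  then show "(x + y, a + b) \<in> \<Union>\<G>" using GH by blast
next
  fix x a c assume "(x, a) \<in> \<Union>\<G>"
  then show "(c *\<^sub>R x, c * a) \<in> \<Union>\<G>" using assms(1) unfolding dominated_linear_graph_def by blast
next
  fix x a assume "(x, a) \<in> \<Union>\<G>"
  then show "a \<le> p x" using assms(1) unfolding dominated_linear_graph_def by blast
qed

lemma dominated_linear_graph_extension_value:
  assumes p: "sublinear p" and G: "dominated_linear_graph p G" "G \<noteq> {}"
  obtains c where "\<And>s a. (s, a) \<in> G \<Longrightarrow> a - p (s - y) \<le> c \<and> c \<le> p (s + y) - a"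
proof -
  have bound: "a - p (s - y) \<le> p (s' + y) - a'" if "(s, a) \<in> G" "(s', a') \<in> G" for s a s' a'
  proof -
    have "a + a' \<le> p (s + s')" using G that unfolding dominated_linear_graph_def by blast
    also have "\<dots> = p ((s - y) + (s' + y))" by (simp add: algebra_simps)
    also have "\<dots> \<le> p (s - y) + p (s' + y)" using p unfolding sublinear_def by blast
    finally show ?thesis by simp
  qed
  define S where "S = {a - p (s - y) | s a. (s, a) \<in> G}"
  obtain s' a' where "(s', a') \<in> G" using G(2) by auto
  then have "bdd_above S" "S \<noteq> {}" unfolding S_def bdd_above_def using bound by blast+
  then have "a - p (s - y) \<le> Sup S \<and> Sup S \<le> p (s + y) - a" if "(s, a) \<in> G" for s a
    using that bound by (auto simp: S_def intro!: cSup_upper cSup_least)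
  then show ?thesis using that by blast
qed

lemma dominated_linear_graph_extension_le:
  assumes p: "sublinear p" and G: "dominated_linear_graph p G" "(s, a) \<in> G"
    and c: "\<And>s a. (s, a) \<in> G \<Longrightarrow> a - p (s - y) \<le> c \<and> c \<le> p (s + y) - a"
  shows "a + t * c \<le> p (s + t *\<^sub>R y)"
proof -
  have hom: "p (u *\<^sub>R x) = u * p x" if "0 < u" for u x using p that unfolding sublinear_def by blast
  have scaled: "((1/u) *\<^sub>R s, (1/u) * a) \<in> G" for u
    using G unfolding dominated_linear_graph_def by blast
  consider "t = 0" | "0 < t" | "t < 0" by linarith
  then show ?thesis
  proof cases
    case 1
    then show ?thesis using G unfolding dominated_linear_graph_def by simp
  next
    case 2
    have "t * c \<le> t * (p ((1/t) *\<^sub>R s + y) - (1/t) * a)"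
      using c[OF scaled] 2 by (intro mult_left_mono) auto
    also have "\<dots> = p (t *\<^sub>R ((1/t) *\<^sub>R s + y)) - a"
      using 2 hom by (simp add: right_diff_distrib)
    finally show ?thesis using 2 by (simp add: scaleR_add_right)
  next
    case 3
    define u where "u = - t"
    have u: "0 < u" using 3 by (simp add: u_def)
    have "u * ((1/u) * a - p ((1/u) *\<^sub>R s - y)) \<le> u * c"
      using c[OF scaled] u by (intro mult_left_mono) auto
    then have "a - p (u *\<^sub>R ((1/u) *\<^sub>R s - y)) \<le> u * c"
      using u hom by (simp add: right_diff_distrib)
    then show ?thesis using u by (simp add: u_def scaleR_diff_right)
  qed
qed

lemma dominated_linear_graph_extend:
  assumes p: "sublinear p" and G: "dominated_linear_graph p G"
    and c: "\<And>s a. (s, a) \<in> G \<Longrightarrow> a - p (s - y) \<le> c \<and> c \<le> p (s + y) - a"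
  shows "dominated_linear_graph p {(s + t *\<^sub>R y, a + t * c) | s a t. (s, a) \<in> G}"
    (is "dominated_linear_graph p ?G'")
  unfolding dominated_linear_graph_def
proof (intro conjI allI impI)
  fix x a z b assume "(x, a) \<in> ?G'" "(z, b) \<in> ?G'"
  then obtain s1 a1 t1 s2 a2 t2 where h: "(s1, a1) \<in> G" "(s2, a2) \<in> G"
    "x = s1 + t1 *\<^sub>R y" "a = a1 + t1 * c" "z = s2 + t2 *\<^sub>R y" "b = a2 + t2 * c"
    by blast
  have "(s1 + s2, a1 + a2) \<in> G" using G h(1,2) unfolding dominated_linear_graph_def by blast
  moreover have "x + z = (s1 + s2) + (t1 + t2) *\<^sub>R y" "a + b = (a1 + a2) + (t1 + t2) * c"
    using h by (simp_all add: algebra_simps)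
  ultimately show "(x + z, a + b) \<in> ?G'" by blast
next
  fix x a k assume "(x, a) \<in> ?G'"
  then obtain s1 a1 t1 where h: "(s1, a1) \<in> G" "x = s1 + t1 *\<^sub>R y" "a = a1 + t1 * c"
    by blast
  have "(k *\<^sub>R s1, k * a1) \<in> G" using G h(1) unfolding dominated_linear_graph_def by blast
  moreover have "k *\<^sub>R x = k *\<^sub>R s1 + (k * t1) *\<^sub>R y" "k * a = k * a1 + (k * t1) * c"
    using h by (simp_all add: algebra_simps)
  ultimately show "(k *\<^sub>R x, k * a) \<in> ?G'" by blast
next
  fix x a assume "(x, a) \<in> ?G'"
  then show "a \<le> p x" using dominated_linear_graph_extension_le[OF p G _ c] by blast
qed

theorem Hahn_Banach_dominated_extension:
  assumes p: "sublinear p" and G0: "dominated_linear_graph p G0" "G0 \<noteq> {}"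
  obtains L where "linear L" "\<And>x. L x \<le> p x" "\<And>x a. (x, a) \<in> G0 \<Longrightarrow> L x = a"
proof -
  define \<A> where "\<A> = {G. G0 \<subseteq> G \<and> dominated_linear_graph p G}"
  have "\<exists>M\<in>\<A>. \<forall>X\<in>\<A>. M \<subseteq> X \<longrightarrow> X = M"
  proof (rule subset_Zorn_nonempty)
    show "\<A> \<noteq> {}" using G0 by (auto simp: \<A>_def)
  next
    fix \<C> assume "\<C> \<noteq> {}" "subset.chain \<A> \<C>"
    then have "\<C> \<subseteq> \<A>" "\<And>G H. G \<in> \<C> \<Longrightarrow> H \<in> \<C> \<Longrightarrow> G \<subseteq> H \<or> H \<subseteq> G"
      unfolding subset.chain_def by auto
    then have "G0 \<subseteq> \<Union>\<C>" "dominated_linear_graph p (\<Union>\<C>)"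
      using \<open>\<C> \<noteq> {}\<close> dominated_linear_graph_Union[of \<C> p] unfolding \<A>_def by blast+
    then show "\<Union>\<C> \<in> \<A>" unfolding \<A>_def by blast
  qed
  then obtain M where M: "dominated_linear_graph p M" "G0 \<subseteq> M"
    and max: "\<And>X. dominated_linear_graph p X \<Longrightarrow> M \<subseteq> X \<Longrightarrow> X = M"
    unfolding \<A>_def by auto
  have unique: "a = b" if "(x, a) \<in> M" "(x, b) \<in> M" for x a b
    using dominated_linear_graph_functional[OF sublinear_zero[OF p] M(1) that] .
  have total: "\<exists>a. (y, a) \<in> M" for y
  proof -
    obtain c where c: "\<And>s a. (s, a) \<in> M \<Longrightarrow> a - p (s - y) \<le> c \<and> c \<le> p (s + y) - a"
      using dominated_linear_graph_extension_value[OF p M(1)] M(2) G0(2) by blast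
    define M' where "M' = {(s + t *\<^sub>R y, a + t * c) | s a t. (s, a) \<in> M}"
    have "(s + 0 *\<^sub>R y, a + 0 * c) \<in> M'" if "(s, a) \<in> M" for s a
      unfolding M'_def using that by blast
    then have "M \<subseteq> M'" by auto
    moreover have "dominated_linear_graph p M'"
      unfolding M'_def by (rule dominated_linear_graph_extend[OF p M(1) c])
    ultimately have "M' = M" by (rule max[rotated])
    obtain s a where "(s, a) \<in> M" using M(2) G0(2) by auto
    then have "(0 *\<^sub>R s, 0 * a) \<in> M" using M(1) unfolding dominated_linear_graph_def by blast
    then have "(0, 0) \<in> M" by simp
    then have "(0 + 1 *\<^sub>R y, 0 + 1 * c) \<in> M'" unfolding M'_def by blast
    then show ?thesis using \<open>M' = M\<close> by auto
  qed
  define L where "L x = (SOME a. (x, a) \<in> M)" for x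
  have LM: "(x, L x) \<in> M" for x unfolding L_def using total by (rule someI_ex)
  have "linear L"
  proof (rule linearI)
    fix x y r
    have "(x + y, L x + L y) \<in> M" "(r *\<^sub>R x, r * L x) \<in> M"
      using M(1) LM[of x] LM[of y] unfolding dominated_linear_graph_def by blast+
    then show "L (x + y) = L x + L y" "L (r *\<^sub>R x) = r *\<^sub>R L x"
      using unique LM by auto
  qed
  moreover have "L x \<le> p x" for x using M(1) LM unfolding dominated_linear_graph_def by blast
  moreover have "L x = a" if "(x, a) \<in> G0" for x a using unique LM M(2) that by blast
  ultimately show ?thesis using that by blast
qed

lemma sublinear_dominating_functional:
  assumes p: "sublinear p" and nonneg: "\<And>x. 0 \<le> p x" and "1 \<le> p x0"
  obtains L where "linear L" "L x0 = 1" "\<And>x. L x \<le> p x"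
proof -
  define G0 where "G0 = {(t *\<^sub>R x0, t) | t. True}"
  have "t \<le> p (t *\<^sub>R x0)" for t
  proof (cases "0 < t")
    case True
    then show ?thesis using p \<open>1 \<le> p x0\<close> unfolding sublinear_def by (simp add: mult_le_cancel_left1)
  next
    case False
    then show ?thesis using nonneg[of "t *\<^sub>R x0"] by linarith
  qed
  then have "dominated_linear_graph p G0"
    unfolding dominated_linear_graph_def G0_def by (auto simp: scaleR_add_left)
  moreover have "G0 \<noteq> {}" "(x0, 1) \<in> G0" unfolding G0_def by (auto intro: exI[of _ 1])
  ultimately show ?thesis using Hahn_Banach_dominated_extension[OF p] that by metis
qed

definition absorbing :: "'a::real_vector set \<Rightarrow> bool" where
  "absorbing W \<longleftrightarrow> (\<forall>x. \<exists>s>0. s *\<^sub>R x \<in> W)"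

text \<open>Only meaningful for absorbing \<open>W\<close>: otherwise the infimum may be taken over the empty set.\<close>

definition minkowski_gauge :: "'a::real_vector set \<Rightarrow> 'a \<Rightarrow> real" where
  "minkowski_gauge W x = Inf {t. 0 < t \<and> (1/t) *\<^sub>R x \<in> W}"

lemma minkowski_gauge_set_nonempty:
  assumes "absorbing W" shows "{t. 0 < t \<and> (1/t) *\<^sub>R x \<in> W} \<noteq> {}"
proof -
  obtain s where "0 < s" "s *\<^sub>R x \<in> W" using assms unfolding absorbing_def by blast
  then have "1/s \<in> {t. 0 < t \<and> (1/t) *\<^sub>R x \<in> W}" by simp
  then show ?thesis by blast
qed

lemma minkowski_gauge_set_bdd_below: "bdd_below {t. 0 < t \<and> (1/t) *\<^sub>R x \<in> W}"
  by (rule bdd_belowI[of _ 0]) simp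

lemma minkowski_gauge_nonneg: "absorbing W \<Longrightarrow> 0 \<le> minkowski_gauge W x"
  unfolding minkowski_gauge_def by (auto intro!: cInf_greatest minkowski_gauge_set_nonempty)

lemma minkowski_gauge_le_1: "x \<in> W \<Longrightarrow> minkowski_gauge W x \<le> 1"
  unfolding minkowski_gauge_def by (rule cInf_lower[OF _ minkowski_gauge_set_bdd_below]) simp

lemma minkowski_gauge_lt_1_imp_mem:
  assumes "convex W" "0 \<in> W" "absorbing W" "minkowski_gauge W x < 1"
  shows "x \<in> W"
proof -
  obtain t where t: "0 < t" "t < 1" "(1/t) *\<^sub>R x \<in> W"
    using cInf_lessD[OF minkowski_gauge_set_nonempty[OF assms(3)] assms(4)[unfolded minkowski_gauge_def]]
    by auto
  have "t *\<^sub>R ((1/t) *\<^sub>R x) + (1 - t) *\<^sub>R 0 \<in> W"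
    using t by (intro convexD[OF assms(1) t(3) assms(2)]) auto
  then show ?thesis using t by simp
qed

lemma minkowski_gauge_scaleR_le:
  assumes "absorbing W" "0 < c"
  shows "minkowski_gauge W (c *\<^sub>R x) \<le> c * minkowski_gauge W x"
proof -
  have "minkowski_gauge W (c *\<^sub>R x) / c \<le> t" if "0 < t" "(1/t) *\<^sub>R x \<in> W" for t
  proof -
    have "minkowski_gauge W (c *\<^sub>R x) \<le> c * t"
      unfolding minkowski_gauge_def using that assms(2)
      by (intro cInf_lower[OF _ minkowski_gauge_set_bdd_below]) simp
    then show ?thesis using assms(2) by (simp add: field_simps)
  qed
  then have "minkowski_gauge W (c *\<^sub>R x) / c \<le> minkowski_gauge W x"
    unfolding minkowski_gauge_def[of W x]
    by (intro cInf_greatest minkowski_gauge_set_nonempty[OF assms(1)]) auto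
  then show ?thesis using assms(2) by (simp add: field_simps)
qed

lemma minkowski_gauge_scaleR:
  assumes "absorbing W" "0 < c"
  shows "minkowski_gauge W (c *\<^sub>R x) = c * minkowski_gauge W x"
proof (rule antisym[OF minkowski_gauge_scaleR_le[OF assms]])
  have "minkowski_gauge W ((1/c) *\<^sub>R (c *\<^sub>R x)) \<le> (1/c) * minkowski_gauge W (c *\<^sub>R x)"
    using assms by (intro minkowski_gauge_scaleR_le) auto
  then show "c * minkowski_gauge W x \<le> minkowski_gauge W (c *\<^sub>R x)"
    using assms(2) by (simp add: field_simps)
qed

lemma minkowski_gauge_add:
  assumes "convex W" "absorbing W"
  shows "minkowski_gauge W (x + y) \<le> minkowski_gauge W x + minkowski_gauge W y"
proof -
  let ?T = "\<lambda>x. {t. 0 < t \<and> (1/t) *\<^sub>R x \<in> W}"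
  have sum: "s + t \<in> ?T (x + y)" if "s \<in> ?T x" "t \<in> ?T y" for s t
  proof -
    from that have s: "0 < s" "(1/s) *\<^sub>R x \<in> W" and t: "0 < t" "(1/t) *\<^sub>R y \<in> W" by auto
    have "(s/(s+t)) *\<^sub>R ((1/s) *\<^sub>R x) + (t/(s+t)) *\<^sub>R ((1/t) *\<^sub>R y) \<in> W"
      using s t by (intro convexD[OF assms(1)]) (auto simp: add_divide_distrib[symmetric])
    moreover have "(s/(s+t)) *\<^sub>R ((1/s) *\<^sub>R x) + (t/(s+t)) *\<^sub>R ((1/t) *\<^sub>R y) = (1/(s+t)) *\<^sub>R (x + y)"
      using s t by (simp add: scaleR_add_right)
    ultimately show ?thesis using s t by simp
  qed
  have "minkowski_gauge W (x + y) \<le> s + t" if "s \<in> ?T x" "t \<in> ?T y" for s t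
    unfolding minkowski_gauge_def by (rule cInf_lower[OF sum[OF that] minkowski_gauge_set_bdd_below])
  then have "minkowski_gauge W (x + y) - t \<le> minkowski_gauge W x" if "t \<in> ?T y" for t
    unfolding minkowski_gauge_def[of W x] using that
    by (intro cInf_greatest minkowski_gauge_set_nonempty[OF assms(2)]) force
  then have "minkowski_gauge W (x + y) - minkowski_gauge W x \<le> minkowski_gauge W y"
    unfolding minkowski_gauge_def[of W y]
    by (intro cInf_greatest minkowski_gauge_set_nonempty[OF assms(2)]) force
  then show ?thesis by simp
qed

lemma sublinear_minkowski_gauge: "convex W \<Longrightarrow> absorbing W \<Longrightarrow> sublinear (minkowski_gauge W)"
  unfolding sublinear_def using minkowski_gauge_add minkowski_gauge_scaleR by blast

lemma lc_tvs_continuous_affine: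
  assumes "lc_tvs TYPE('z::{real_vector,topological_space})"
  shows "continuous_on UNIV (\<lambda>x::'z. r *\<^sub>R x - c)"
proof -
  have add: "continuous_on UNIV (\<lambda>p::'z \<times> 'z. fst p + snd p)"
   and mult: "continuous_on UNIV (\<lambda>p::real \<times> 'z. fst p *\<^sub>R snd p)"
    using assms unfolding lc_tvs_def by auto
  have "continuous_on UNIV (\<lambda>x::'z. r *\<^sub>R x)"
    using continuous_on_compose2[OF mult continuous_on_Pair[OF continuous_on_const continuous_on_id]]
    by simp
  from continuous_on_compose2[OF add continuous_on_Pair[OF this continuous_on_const[of _ "- c"]]]
  show ?thesis by simp
qed

lemma lc_tvs_open_affine_preimage:
  assumes "lc_tvs TYPE('z::{real_vector,topological_space})" "open S"
  shows "open {x::'z. r *\<^sub>R x - c \<in> S}"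
  using open_vimage[OF assms(2) lc_tvs_continuous_affine[OF assms(1)]] by (simp add: vimage_def)

lemma lc_tvs_open_absorbing:
  assumes "lc_tvs TYPE('z::{real_vector,topological_space})" "open W" "0 \<in> W"
  shows "absorbing (W :: 'z set)"
  unfolding absorbing_def
proof
  fix x :: 'z
  have "continuous_on UNIV (\<lambda>p::real \<times> 'z. fst p *\<^sub>R snd p)"
    using assms(1) unfolding lc_tvs_def by auto
  from continuous_on_compose2[OF this continuous_on_Pair[OF continuous_on_id continuous_on_const]]
  have "continuous_on UNIV (\<lambda>s::real. s *\<^sub>R x)" by simp
  then have "open ((\<lambda>s. s *\<^sub>R x) -` W)" using open_vimage[OF assms(2)] by blast
  moreover have "0 \<in> (\<lambda>s. s *\<^sub>R x) -` W" using assms(3) by simp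
  ultimately obtain e where "0 < e" "ball 0 e \<subseteq> (\<lambda>s. s *\<^sub>R x) -` W"
    by (meson open_contains_ball)
  moreover have "e/2 \<in> ball 0 e" using \<open>0 < e\<close> by simp
  ultimately have "(e/2) *\<^sub>R x \<in> W" by blast
  then show "\<exists>s>0. s *\<^sub>R x \<in> W" using \<open>0 < e\<close> by (intro exI[of _ "e/2"]) simp
qed

lemma lc_tvs_continuous_linear_bounded:
  assumes lc: "lc_tvs TYPE('z::{real_vector,topological_space})"
    and L: "linear (L :: 'z \<Rightarrow> real)" and N: "open N" "0 \<in> N" "\<And>x. x \<in> N \<Longrightarrow> \<bar>L x\<bar> \<le> 1"
  shows "continuous_on UNIV L"
  unfolding continuous_on_topological
proof (intro ballI allI impI)
  fix x B assume "open B" "L x \<in> B"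
  then obtain e where e: "0 < e" "\<And>y. dist y (L x) < e \<Longrightarrow> y \<in> B" unfolding open_dist by blast
  define A where "A = {y. (2/e) *\<^sub>R y - (2/e) *\<^sub>R x \<in> N}"
  have "L y \<in> B" if "y \<in> A" for y
  proof -
    have "\<bar>L ((2/e) *\<^sub>R y - (2/e) *\<^sub>R x)\<bar> \<le> 1" using N(3) that unfolding A_def by blast
    moreover have "L ((2/e) *\<^sub>R y - (2/e) *\<^sub>R x) = (2/e) * (L y - L x)"
      by (simp add: linear_diff[OF L] linear_scale[OF L] right_diff_distrib)
    ultimately have "(2/e) * \<bar>L y - L x\<bar> \<le> 1"
      using e(1) by (simp only: abs_mult) simp
    then have "\<bar>L y - L x\<bar> < e" using e(1) by (simp add: field_simps)
    then show ?thesis by (intro e(2)) (simp add: dist_real_def)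
  qed
  moreover have "open A" "x \<in> A" unfolding A_def using lc_tvs_open_affine_preimage[OF lc N(1)] N(2) by auto
  ultimately show "\<exists>A. open A \<and> x \<in> A \<and> (\<forall>y\<in>UNIV. y \<in> A \<longrightarrow> L y \<in> B)" by blast
qed

lemma lc_tvs_continuous_dominated_by_gauge:
  assumes lc: "lc_tvs TYPE('z::{real_vector,topological_space})"
    and W: "open W" "0 \<in> W" and L: "linear (L :: 'z \<Rightarrow> real)" "\<And>x. L x \<le> minkowski_gauge W x"
  shows "continuous_on UNIV L"
proof (rule lc_tvs_continuous_linear_bounded[OF lc L(1)])
  show "open (W \<inter> {x. - x \<in> W})"
    using lc_tvs_open_affine_preimage[OF lc W(1), of "-1" 0] by (intro open_Int W(1)) simp
  show "0 \<in> W \<inter> {x. - x \<in> W}" using W(2) by simp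
  fix x assume "x \<in> W \<inter> {x. - x \<in> W}"
  then have "L x \<le> 1" "L (- x) \<le> 1"
    using L(2)[of x] L(2)[of "- x"] minkowski_gauge_le_1[of x W] minkowski_gauge_le_1[of "- x" W] by auto
  then show "\<bar>L x\<bar> \<le> 1" using linear_neg[OF L(1)] by (simp add: abs_le_iff)
qed

lemma lc_tvs_open_setplus:
  assumes "lc_tvs TYPE('z::{real_vector,topological_space})" "open V"
  shows "open (setplus (V :: 'z set) B)"
proof -
  have "setplus V B = (\<Union>b\<in>B. {x. x - b \<in> V})"
  proof (intro set_eqI iffI)
    fix x assume "x \<in> (\<Union>b\<in>B. {x. x - b \<in> V})"
    then obtain b where "b \<in> B" "x - b \<in> V" by auto
    then show "x \<in> setplus V B" unfolding setplus_def by (intro CollectI exI[of _ "x - b"] exI[of _ b]) auto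
  qed (force simp: setplus_def)
  moreover have "open {x. x - b \<in> V}" for b
    using lc_tvs_open_affine_preimage[OF assms, of 1] by simp
  ultimately show ?thesis by auto
qed

lemma convex_setplus: "convex A \<Longrightarrow> convex B \<Longrightarrow> convex (setplus A B)"
proof -
  assume "convex A" "convex B"
  moreover have "setplus A B = (\<Union>a\<in>A. \<Union>b\<in>B. {a + b})" by (auto simp: setplus_def)
  ultimately show ?thesis using convex_sums by metis
qed

lemma lc_tvs_open_setplus_differences:
  assumes lc: "lc_tvs TYPE('z::{real_vector,topological_space})"
    and V: "open V" "convex V" "0 \<in> V" and A: "convex A" "a0 \<in> (A :: 'z set)"
  shows "open (setplus V ((\<lambda>a. a0 - a) ` A))" "convex (setplus V ((\<lambda>a. a0 - a) ` A))"
    "0 \<in> setplus V ((\<lambda>a. a0 - a) ` A)"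
proof -
  have "convex ((+) a0 ` uminus ` A)" by (rule convex_translation[OF convex_negations[OF A(1)]])
  moreover have "(+) a0 ` uminus ` A = (\<lambda>a. a0 - a) ` A" by (auto simp: image_image)
  ultimately show "convex (setplus V ((\<lambda>a. a0 - a) ` A))" by (simp add: convex_setplus[OF V(2)])
  have "0 + (a0 - a0) \<in> setplus V ((\<lambda>a. a0 - a) ` A)" unfolding setplus_def using V(3) A(2) by blast
  then show "0 \<in> setplus V ((\<lambda>a. a0 - a) ` A)" by simp
qed (rule lc_tvs_open_setplus[OF lc V(1)])

theorem lc_tvs_separation:
  assumes lc: "lc_tvs TYPE('z::{real_vector,topological_space})"
    and A: "closed A" "convex A" and z: "z \<notin> (A :: 'z set)"
  obtains L e where "L \<in> topdual" "0 < e" "\<And>a. a \<in> A \<Longrightarrow> L z + e \<le> L a"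
proof (cases "A = {}")
  case True
  have "(\<lambda>_. 0) \<in> (topdual :: ('z \<Rightarrow> real) set)" unfolding topdual_def by (simp add: linear_zero)
  with True show ?thesis using that[of "\<lambda>_. 0" 1] by simp
next
  case False
  then obtain a0 where a0: "a0 \<in> A" by auto
  have "open {v. v + z \<notin> A}"
    using lc_tvs_open_affine_preimage[OF lc open_Compl[OF A(1)], of 1 "- z"] by simp
  moreover have "0 \<in> {v. v + z \<notin> A}" using z by simp
  ultimately obtain V where "open V" "convex V" "0 \<in> V" "V \<subseteq> {v. v + z \<notin> A}"
    using lc unfolding lc_tvs_def by meson
  then have V: "open V" "convex V" "0 \<in> V" "\<And>v. v \<in> V \<Longrightarrow> v + z \<notin> A" by auto
  txt \<open>\<open>W = V + (a0 - A)\<close> is an open convex neighbourhood of \<open>0\<close> avoiding \<open>a0 - z\<close>, so its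
    gauge dominates a functional that is \<open>1\<close> at \<open>a0 - z\<close> and at most \<open>1\<close> on \<open>W\<close>.\<close>
  define W where "W = setplus V ((\<lambda>a. a0 - a) ` A)"
  have W: "open W" "convex W" "0 \<in> W"
    unfolding W_def using lc_tvs_open_setplus_differences[OF lc V(1-3) A(2) a0] by auto
  have absorbing: "absorbing W" using lc_tvs_open_absorbing[OF lc W(1,3)] .
  have "a0 - z \<notin> W"
  proof
    assume "a0 - z \<in> W"
    then obtain v a where "v \<in> V" "a \<in> A" "a0 - z = v + (a0 - a)" unfolding W_def setplus_def by blast
    then show False using V(4) by (metis add_diff_cancel_left' diff_add_cancel diff_diff_eq2)
  qed
  then have "1 \<le> minkowski_gauge W (a0 - z)"
    using minkowski_gauge_lt_1_imp_mem[OF W(2,3) absorbing] by force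
  then obtain L where L: "linear L" "L (a0 - z) = 1" "\<And>x. L x \<le> minkowski_gauge W x"
    using sublinear_dominating_functional[OF sublinear_minkowski_gauge[OF W(2) absorbing]]
      minkowski_gauge_nonneg[OF absorbing] by metis
  have "L \<in> topdual"
    unfolding topdual_def using L(1) lc_tvs_continuous_dominated_by_gauge[OF lc W(1,3) L(1,3)] by blast
  moreover obtain e where e: "0 < e" "e *\<^sub>R (a0 - z) \<in> V"
    using lc_tvs_open_absorbing[OF lc V(1,3)] unfolding absorbing_def by blast
  moreover have "L z + e \<le> L a" if "a \<in> A" for a
  proof -
    have "e *\<^sub>R (a0 - z) + (a0 - a) \<in> W" unfolding W_def setplus_def using e(2) that by blast
    then have "L (e *\<^sub>R (a0 - z) + (a0 - a)) \<le> 1"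
      using L(3) minkowski_gauge_le_1 order_trans by blast
    moreover have "L (e *\<^sub>R (a0 - z) + (a0 - a)) = e + L a0 - L a"
      using L(2) by (simp add: linear_add[OF L(1)] linear_diff[OF L(1)] linear_scale[OF L(1)])
    moreover have "L a0 - L z = 1" using L(2) by (simp add: linear_diff[OF L(1)])
    ultimately show ?thesis by simp
  qed
  ultimately show ?thesis using that by blast
qed

lemma ereal_minus_inf_PInf [simp]: "ereal_minus_inf r \<infinity> = -\<infinity>"
  unfolding ereal_minus_inf_def inf_plus_def by (rule ereal_bot) (auto intro: Inf_lower)

lemma ereal_minus_inf_MInf:
  "ereal_minus_inf r (-\<infinity>) = (if r = -\<infinity> then -\<infinity> else \<infinity>)"
proof (cases "r = -\<infinity>")
  case True
  then show ?thesis unfolding ereal_minus_inf_def by simp (rule ereal_bot, auto intro: Inf_lower)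
next
  case False
  then have "{ereal t |t. r \<le> inf_plus (-\<infinity>) (ereal t)} = {}"
    by (auto simp: inf_plus_def)
  then show ?thesis using False unfolding ereal_minus_inf_def by (simp add: top_ereal_def)
qed

lemma ereal_minus_inf_real [simp]: "ereal_minus_inf r (ereal b) = r - ereal b"
proof -
  have set: "{ereal t |t. r \<le> inf_plus (ereal b) (ereal t)} = {ereal t |t. r - ereal b \<le> ereal t}"
    by (cases r) (auto simp: inf_plus_def algebra_simps)
  show ?thesis
  proof (cases r)
    case (real a)
    have "Inf {ereal t |t. r - ereal b \<le> ereal t} = ereal (a - b)"
      by (rule antisym, rule Inf_lower) (auto simp: real intro!: Inf_greatest)
    then show ?thesis unfolding ereal_minus_inf_def set by (simp add: real)
  next
    case PInf
    then show ?thesis unfolding ereal_minus_inf_def set by (simp add: top_ereal_def)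
  next
    case MInf
    then show ?thesis unfolding ereal_minus_inf_def set
      by simp (rule ereal_bot, auto intro: Inf_lower)
  qed
qed

lemma ereal_minus_inf_nonpos_iff: "ereal_minus_inf r s \<le> 0 \<longleftrightarrow> r \<le> s"
  by (cases s; cases r) (simp_all add: ereal_minus_inf_MInf)

lemma ereal_minus_inf_nonneg_iff:
  "s \<noteq> \<infinity> \<Longrightarrow> (s = -\<infinity> \<or> 0 \<le> ereal_minus_inf r s) \<longleftrightarrow> s \<le> r"
  by (cases s; cases r) simp_all

lemma GC_eq: "A \<in> GC C \<Longrightarrow> closure (convex hull (setplus A C)) = A"
  unfolding GC_def by (rule sym) simp

lemma GC_closed: "A \<in> GC C \<Longrightarrow> closed A"
  by (subst GC_eq[symmetric]) (simp_all only: closed_closure)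

lemma subset_closure_convex_hull: "S \<subseteq> closure (convex hull S)"
  by (meson closure_subset hull_subset subset_trans)

lemma GC_setplus_subset: "A \<in> GC C \<Longrightarrow> setplus A C \<subseteq> A"
  using subset_closure_convex_hull[of "setplus A C"] by (simp only: GC_eq)

lemma GC_convex:
  assumes "A \<in> GC C" "0 \<in> C"
  shows "convex A"
proof -
  have "a + 0 \<in> setplus A C" if "a \<in> A" for a unfolding setplus_def using that assms(2) by blast
  then have "A \<subseteq> setplus A C" by auto
  then have "convex hull A \<subseteq> convex hull (setplus A C)" by (rule hull_mono)
  also have "\<dots> \<subseteq> closure (convex hull (setplus A C))" by (rule closure_subset)
  also have "\<dots> = A" using assms(1) by (rule GC_eq)
  finally show ?thesis using convex_hull_eq hull_subset subset_antisym by metis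
qed

lemma bounded_below_imp_nonneg_on_cone:
  fixes L :: "'a::real_vector \<Rightarrow> real"
  assumes "setplus A C \<subseteq> A" "a0 \<in> A" "cone C" "linear L" "\<And>a. a \<in> A \<Longrightarrow> m \<le> L a" "c \<in> C"
  shows "0 \<le> L c"
proof (rule ccontr)
  assume "\<not> 0 \<le> L c"
  define t where "t = (L a0 - m + 1) / (- L c)"
  have "m \<le> L a0" using assms(2,5) by blast
  then have "0 \<le> t" using \<open>\<not> 0 \<le> L c\<close> unfolding t_def by (intro divide_nonneg_pos) auto
  then have "t *\<^sub>R c \<in> C" using assms(3,6) unfolding cone_def by blast
  then have "a0 + t *\<^sub>R c \<in> setplus A C" unfolding setplus_def using assms(2) by blast
  then have "m \<le> L (a0 + t *\<^sub>R c)" using assms(1,5) by blast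
  moreover have "L (a0 + t *\<^sub>R c) = L a0 + t * L c"
    by (simp add: linear_add[OF assms(4)] linear_scale[OF assms(4)])
  moreover have "L a0 + t * L c = m - 1" using \<open>\<not> 0 \<le> L c\<close> by (simp add: t_def)
  ultimately show False by simp
qed

lemma sv_inf_eq_iff_subset:
  assumes "closed (f x0)" "convex (f x0)"
  shows "f x0 = sv_inf f \<longleftrightarrow> (\<forall>x. f x \<subseteq> f x0)"
proof
  assume eq: "f x0 = sv_inf f"
  show "\<forall>x. f x \<subseteq> f x0"
  proof
    fix x
    have "f x \<subseteq> (\<Union>x. f x)" by blast
    also have "\<dots> \<subseteq> sv_inf f" unfolding sv_inf_def by (rule subset_closure_convex_hull)
    finally show "f x \<subseteq> f x0" using eq by simp
  qed
next
  assume "\<forall>x. f x \<subseteq> f x0"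
  then have "(\<Union>x. f x) = f x0" by auto
  then show "f x0 = sv_inf f"
    unfolding sv_inf_def using assms by (simp add: hull_same closure_closed)
qed

lemma zero_in_setminus_geom_iff: "0 \<in> setminus_geom A B \<longleftrightarrow> B \<subseteq> A"
  unfolding setminus_geom_def setplus_def by auto

lemma setminus_geom_subset_recc_cone:
  "A \<noteq> {} \<Longrightarrow> B \<subseteq> A \<Longrightarrow> setminus_geom B A \<subseteq> recc_cone A"
  unfolding setminus_geom_def recc_cone_def by auto

lemma scal_phi_antimono: "f x \<subseteq> f y \<Longrightarrow> scal_phi f zs y \<le> scal_phi f zs x"
  unfolding scal_phi_def by (rule Inf_superset_mono) blast

lemma scal_phi_not_PInf: "x \<in> sv_dom f \<Longrightarrow> scal_phi f zs x \<noteq> \<infinity>"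
  unfolding scal_phi_def sv_dom_def by (auto simp: Inf_eq_PInfty)

lemma scal_phi_le_imp_subset:
  assumes lc: "lc_tvs TYPE('z::{real_vector,topological_space})"
    and C: "cone C" "0 \<in> C" and fy: "(f y :: 'z set) \<in> GC C" "f y \<noteq> {}"
    and le: "\<And>zs. zs \<in> negdual C - {\<lambda>_. 0} \<Longrightarrow> scal_phi f zs y \<le> scal_phi f zs x"
  shows "f x \<subseteq> f y"
proof
  fix z assume z: "z \<in> f x"
  show "z \<in> f y"
  proof (rule ccontr)
    assume "z \<notin> f y"
    then obtain L e where L: "L \<in> topdual" "0 < e" "\<And>a. a \<in> f y \<Longrightarrow> L z + e \<le> L a"
      using lc_tvs_separation[OF lc GC_closed[OF fy(1)] GC_convex[OF fy(1) C(2)]] by blast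
    obtain a0 where a0: "a0 \<in> f y" using fy(2) by auto
    have lin: "linear L" "continuous_on UNIV L" using L(1) unfolding topdual_def by auto
    have "0 \<le> L c" if "c \<in> C" for c
      using bounded_below_imp_nonneg_on_cone[OF GC_setplus_subset[OF fy(1)] a0 C(1) lin(1) L(3) that] .
    moreover have "linear (\<lambda>v. - L v)" using lin(1) by (simp add: linear_compose_neg)
    moreover have "continuous_on UNIV (\<lambda>v. - L v)" using lin(2) by (intro continuous_on_minus)
    moreover have "(\<lambda>v. - L v) \<noteq> (\<lambda>_. 0)"
    proof
      assume "(\<lambda>v. - L v) = (\<lambda>_. 0)"
      then have "- L z = 0" "- L a0 = 0" by (fact fun_cong)+
      then show False using L(2) L(3)[OF a0] by simp
    qed
    ultimately have zs: "(\<lambda>v. - L v) \<in> negdual C - {\<lambda>_. 0}"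
      unfolding negdual_def topdual_def by auto
    have "ereal (L z + e) \<le> scal_phi f (\<lambda>v. - L v) y"
      unfolding scal_phi_def by (rule Inf_greatest) (use L(3) in auto)
    also have "\<dots> \<le> scal_phi f (\<lambda>v. - L v) x" using le[OF zs] .
    also have "\<dots> \<le> ereal (L z)"
      unfolding scal_phi_def by (rule Inf_lower) (use z in auto)
    finally show False using L(2) by simp
  qed
qed

theorem mainTheorem18:
  fixes C :: "'z::{real_vector,t2_space} set"
    and f :: "'x::real_vector \<Rightarrow> 'z set"
    and x0 :: 'x
  assumes "lc_tvs TYPE('z)"
    and "closed C" and "convex C" and "cone C" and "0 \<in> C"
    and "negdual C - {\<lambda>_. 0} \<noteq> {}"
    and "\<forall>x. f x \<in> GC C"
    and "x0 \<in> sv_dom f"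
  shows "((f x0 = sv_inf f) \<longleftrightarrow>
           (\<forall>x. \<forall>zs \<in> negdual C - {\<lambda>_. 0}. scal_phi f zs x0 \<le> scal_phi f zs x))
       \<and> ((f x0 = sv_inf f) \<longleftrightarrow>
           (\<forall>x. \<forall>zs \<in> negdual C - {\<lambda>_. 0}.
              ereal_minus_inf (scal_phi f zs x0) (scal_phi f zs x) \<le> 0))
       \<and> ((f x0 = sv_inf f) \<longleftrightarrow> (\<forall>x. 0 \<in> setminus_geom (f x0) (f x)))
       \<and> ((f x0 = sv_inf f) \<longleftrightarrow>
           (\<forall>x. \<forall>zs \<in> negdual C - {\<lambda>_. 0}.
              scal_phi f zs x0 = -\<infinity> \<or>
              0 \<le> ereal_minus_inf (scal_phi f zs x) (scal_phi f zs x0)))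
       \<and> ((f x0 = sv_inf f) \<longrightarrow>
           (\<forall>x. setminus_geom (f x) (f x0) \<subseteq> recc_cone (f x0)))"
proof -
  have fx0: "f x0 \<in> GC C" "f x0 \<noteq> {}" using assms(7,8) unfolding sv_dom_def by auto
  have inf_iff: "f x0 = sv_inf f \<longleftrightarrow> (\<forall>x. f x \<subseteq> f x0)"
    by (rule sv_inf_eq_iff_subset[where f = f, OF GC_closed[OF fx0(1)] GC_convex[OF fx0(1) assms(5)]])
  have phi_iff: "(\<forall>x. f x \<subseteq> f x0) \<longleftrightarrow>
      (\<forall>x. \<forall>zs \<in> negdual C - {\<lambda>_. 0}. scal_phi f zs x0 \<le> scal_phi f zs x)"
    using scal_phi_antimono[of f _ x0] scal_phi_le_imp_subset[OF assms(1,4,5), of f x0] fx0 by blast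
  have "scal_phi f zs x0 \<noteq> \<infinity>" for zs using scal_phi_not_PInf[OF assms(8)] .
  then have "(scal_phi f zs x0 = -\<infinity> \<or> 0 \<le> ereal_minus_inf (scal_phi f zs x) (scal_phi f zs x0))
      \<longleftrightarrow> scal_phi f zs x0 \<le> scal_phi f zs x" for zs x
    by (rule ereal_minus_inf_nonneg_iff)
  moreover have "(\<forall>x. f x \<subseteq> f x0) \<longrightarrow> (\<forall>x. setminus_geom (f x) (f x0) \<subseteq> recc_cone (f x0))"
    using setminus_geom_subset_recc_cone[OF fx0(2)] by blast
  ultimately show ?thesis
    unfolding inf_iff zero_in_setminus_geom_iff ereal_minus_inf_nonpos_iff phi_iff by simp
qed

end
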